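(* Let $\mu$ be a differentiable growth rate and $\gamma_1,\gamma_2\in\rho^{ND}_\mu(A)$ with $\gamma_1<\gamma_2$. The following are equivalent: (a) $\mathcal U_{\gamma_2}\cap\mathcal V_{\gamma_1}\ne\mathbb R\times\{0\}$; (b) $[\gamma_1,\gamma_2]\cap\Sigma^{ND}_\mu(A)\ne\emptyset$; (c) $\operatorname{rank}\mathcal U_{\gamma_1}<\operatorname{rank}\mathcal U_{\gamma_2}$; (d) $\operatorname{rank}\mathcal V_{\gamma_1}>\operatorname{rank}\mathcal V_{\gamma_2}$.
   Context: Fix $n\ge1$ and a norm on $\mathbb R^n$. Let $A:\mathbb R\to M_n(\mathbb R)$ be continuous with evolution operator $\Phi(t,s)$. $\operatorname{sign}(s)\in\{-1,0,1\}$. A growth rate is a strictly increasing $\mu:\mathbb R\to(0,\infty)$, $\mu(0)=1$, $\mu\to+\infty$ at $+\infty$, $\mu\to0$ at $-\infty$; differentiable if it is differentiable. A linear system $x'=C(t)x$ with evolution operator $\Psi$ admits a nonuniform $\mu$-dichotomy (N$\mu$D) if there are projections $P(t)$ with $P(t)\Psi(t,s)=\Psi(t,s)P(s)$ and constants $K\ge1$, $\alpha<0$, $\beta>0$, $\theta,\nu\ge0$, $\alpha+\theta<0$, $\beta-\nu>0$ with ($Q=I-P$) $\|\Psi(t,s)P(s)\|\le K(\mu(t)/\mu(s))^{\alpha}\mu(s)^{\operatorname{sign}(s)\theta}$ for $t\ge s$ and $\|\Psi(t,s)Q(s)\|\le K(\mu(t)/\mu(s))^{\beta}\mu(s)^{\operatorname{sign}(s)\nu}$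 for $t\le s$. $\Sigma^{ND}_\mu(A)=\{\gamma: x'=(A(t)-\gamma\frac{\mu'(t)}{\mu(t)}I)x\text{ admits no N}\mu\text{D}\}$, $\rho^{ND}_\mu(A)=\mathbb R\setminus\Sigma^{ND}_\mu(A)$. $\mathcal U_\gamma=\{(s,\xi):\sup_{t\ge0}\|\Phi(t,s)\xi\|\mu(t)^{-\gamma}<\infty\}$, $\mathcal V_\gamma=\{(s,\xi):\sup_{t\le0}\|\Phi(t,s)\xi\|\mu(t)^{-\gamma}<\infty\}$. These are linear integral manifolds: their fibers $\mathcal W(s)=\{\xi:(s,\xi)\in\mathcal W\}$ are linear subspaces of $\mathbb R^n$ of a dimension independent of $s$, called the rank. Intersection is fiberwise. *)

theory Defs
  imports "HOL-Analysis.Analysis"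
begin

definition growth_rate :: "(real \<Rightarrow> real) \<Rightarrow> bool" where
  "growth_rate \<mu> \<longleftrightarrow> strict_mono \<mu> \<and> (\<forall>t. 0 < \<mu> t) \<and> \<mu> 0 = 1
     \<and> filterlim \<mu> at_top at_top \<and> (\<mu> \<longlongrightarrow> 0) at_bot"

definition diff_growth_rate :: "(real \<Rightarrow> real) \<Rightarrow> bool" where
  "diff_growth_rate \<mu> \<longleftrightarrow> growth_rate \<mu> \<and> (\<forall>t. \<mu> differentiable (at t))"

definition evol_op :: "(real \<Rightarrow> real^'n^'n) \<Rightarrow> (real \<Rightarrow> real \<Rightarrow> real^'n^'n) \<Rightarrow> bool" where
  "evol_op C \<Psi> \<longleftrightarrow> (\<forall>s. \<Psi> s s = mat 1 \<and>
      (\<forall>t. ((\<lambda>t. \<Psi> t s) has_vector_derivative (C t ** \<Psi> t s)) (at t)))"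

definition mnorm :: "real^'n^'n \<Rightarrow> real" where
  "mnorm M = onorm (\<lambda>x. M *v x)"

definition NmuD :: "(real \<Rightarrow> real) \<Rightarrow> (real \<Rightarrow> real^'n^'n) \<Rightarrow> bool" where
  "NmuD \<mu> C \<longleftrightarrow> (\<exists>\<Psi>. evol_op C \<Psi> \<and>
     (\<exists>P K \<alpha> \<beta> \<theta> \<nu>. (\<forall>t. P t ** P t = P t) \<and> (\<forall>t s. P t ** \<Psi> t s = \<Psi> t s ** P s)
       \<and> K \<ge> 1 \<and> \<alpha> < 0 \<and> \<beta> > 0 \<and> \<theta> \<ge> 0 \<and> \<nu> \<ge> 0 \<and> \<alpha> + \<theta> < 0 \<and> \<beta> - \<nu> > 0
       \<and> (\<forall>t s. t \<ge> s \<longrightarrow> mnorm (\<Psi> t s ** P s)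
              \<le> K * (\<mu> t / \<mu> s) powr \<alpha> * \<mu> s powr (sgn s * \<theta>))
       \<and> (\<forall>t s. t \<le> s \<longrightarrow> mnorm (\<Psi> t s ** (mat 1 - P s))
              \<le> K * (\<mu> t / \<mu> s) powr \<beta> * \<mu> s powr (sgn s * \<nu>))))"

definition SigmaND :: "(real \<Rightarrow> real) \<Rightarrow> (real \<Rightarrow> real^'n^'n) \<Rightarrow> real set" where
  "SigmaND \<mu> A = {\<gamma>. \<not> NmuD \<mu> (\<lambda>t. A t - (\<gamma> * deriv \<mu> t / \<mu> t) *\<^sub>R mat 1)}"

definition rhoND :: "(real \<Rightarrow> real) \<Rightarrow> (real \<Rightarrow> real^'n^'n) \<Rightarrow> real set" where
  "rhoND \<mu> A = UNIV - SigmaND \<mu> A"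

definition Uset :: "(real \<Rightarrow> real) \<Rightarrow> (real \<Rightarrow> real \<Rightarrow> real^'n^'n) \<Rightarrow> real \<Rightarrow> (real \<times> (real^'n)) set" where
  "Uset \<mu> \<Phi> \<gamma> = {(s, \<xi>). bdd_above ((\<lambda>t. norm (\<Phi> t s *v \<xi>) * \<mu> t powr (- \<gamma>)) ` {0..})}"

definition Vset :: "(real \<Rightarrow> real) \<Rightarrow> (real \<Rightarrow> real \<Rightarrow> real^'n^'n) \<Rightarrow> real \<Rightarrow> (real \<times> (real^'n)) set" where
  "Vset \<mu> \<Phi> \<gamma> = {(s, \<xi>). bdd_above ((\<lambda>t. norm (\<Phi> t s *v \<xi>) * \<mu> t powr (- \<gamma>)) ` {..0})}"

text \<open>Rank of a linear integral manifold: the dimension of its fiber (independent of s; taken at s = 0).\<close>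
definition rank_im :: "(real \<times> (real^'n)) set \<Rightarrow> nat" where
  "rank_im W = dim {\<xi>. (0, \<xi>) \<in> W}"

end

theory Submission
  imports Defs
begin

text \<open>For \<open>\<gamma>\<close> in the resolvent set the shifted system \<open>x' = (A t - \<gamma> \<mu>'(t)/\<mu>(t)) x\<close>,
  whose evolution operator is \<open>(\<mu> t / \<mu> s) powr (-\<gamma>) \<Phi> t s\<close>, admits a \<open>\<mu>\<close>-dichotomy with
  projections \<open>P\<close>; the fiber of \<open>\<U>\<^sub>\<gamma>\<close> at time 0 is the range and the fiber of \<open>\<V>\<^sub>\<gamma>\<close> the
  kernel of \<open>P 0\<close>, so the two are complementary. A small change of \<open>\<gamma>\<close> keeps the dichotomy with
  the same projections, so these fibers are locally constant on the resolvent set, hence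
  constant on every interval inside it. Conversely, if the ranks at \<open>\<gamma>\<^sub>1 < \<gamma>\<^sub>2\<close> agree, the
  monotonicity \<open>\<U>\<^sub>\<gamma>\<^sub>1 \<subseteq> \<U>\<^sub>\<gamma>\<^sub>2\<close>, \<open>\<V>\<^sub>\<gamma>\<^sub>2 \<subseteq> \<V>\<^sub>\<gamma>\<^sub>1\<close> forces equal fibers and equal projections, and
  the stable estimate at \<open>\<gamma>\<^sub>1\<close> together with the unstable estimate at \<open>\<gamma>\<^sub>2\<close> gives a dichotomy
  at every \<open>\<gamma>\<close> in between. The remaining equivalences are dimension counts.\<close>

section \<open>Linear matrix differential equations\<close>

lemma matrix_add_rdistrib: "((A::'a::semiring_1^'m^'n) + B) ** C = A ** C + B ** C"
  by (vector matrix_matrix_mult_def sum.distrib[symmetric] field_simps)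

lemma matrix_diff_rdistrib: "((A::'a::ring_1^'m^'n) - B) ** C = A ** C - B ** C"
  by (vector matrix_matrix_mult_def sum_subtractf[symmetric] field_simps)

lemma matrix_diff_ldistrib: "(C::'a::ring_1^'m^'n) ** (A - B) = C ** A - C ** B"
  by (vector matrix_matrix_mult_def sum_subtractf[symmetric] field_simps)

lemma bounded_bilinear_matrix_mult:
  "bounded_bilinear (\<lambda>(A::real^'m^'n) (B::real^'k^'m). A ** B)"
proof -
  have "bilinear (\<lambda>(A::real^'m^'n) (B::real^'k^'m). A ** B)"
    unfolding bilinear_def
    by (auto intro!: linearI simp: matrix_add_ldistrib matrix_add_rdistrib
        scalar_matrix_assoc matrix_scalar_ac)
  then show ?thesis
    using bilinear_conv_bounded_bilinear by blast
qed

lemma nonneg_vanishing_forward: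
  fixes f f' :: "real \<Rightarrow> real"
  assumes "s \<le> t" and "f s = 0" and "0 \<le> f t"
    and deriv: "\<And>r. r \<in> {s..t} \<Longrightarrow> (f has_real_derivative f' r) (at r)"
    and growth: "\<And>r. r \<in> {s..t} \<Longrightarrow> f' r \<le> c * f r"
  shows "f t = 0"
proof -
  define g where "g r = f r * exp (- c * r)" for r
  have "g t \<le> g s"
  proof (rule DERIV_nonpos_imp_nonincreasing[OF \<open>s \<le> t\<close>])
    fix r assume "s \<le> r" "r \<le> t"
    then have "(g has_real_derivative (f' r - c * f r) * exp (- c * r)) (at r)"
      unfolding g_def
      by (auto intro!: derivative_eq_intros deriv simp: algebra_simps)
    moreover have "(f' r - c * f r) * exp (- c * r) \<le> 0"
      using growth \<open>s \<le> r\<close> \<open>r \<le> t\<close> by (simp add: mult_nonpos_nonneg)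
    ultimately show "\<exists>y. (g has_real_derivative y) (at r) \<and> y \<le> 0"
      by blast
  qed
  then show ?thesis
    using \<open>f s = 0\<close> \<open>0 \<le> f t\<close> by (simp add: g_def mult_le_0_iff)
qed

lemma nonneg_vanishing_gronwall:
  fixes f f' :: "real \<Rightarrow> real"
  assumes "f s = 0" and nonneg: "\<And>r. 0 \<le> f r"
    and deriv: "\<And>r. (f has_real_derivative f' r) (at r)"
    and growth: "\<And>r. r \<in> {min s t..max s t} \<Longrightarrow> \<bar>f' r\<bar> \<le> c * f r"
  shows "f t = 0"
proof (cases "s \<le> t")
  case True
  show ?thesis
    by (rule nonneg_vanishing_forward[OF True \<open>f s = 0\<close> nonneg deriv])
      (use growth True in \<open>auto simp: abs_le_iff\<close>)
next
  case False
  have "f (- (- t)) = 0"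
  proof (rule nonneg_vanishing_forward[where f = "\<lambda>r. f (- r)" and f' = "\<lambda>r. - f' (- r)"])
    fix r
    show "((\<lambda>r. f (- r)) has_real_derivative - f' (- r)) (at r)"
      using deriv DERIV_mirror by blast
    assume "r \<in> {- s..- t}"
    then show "- f' (- r) \<le> c * f (- r)"
      using growth[of "- r"] False by (auto simp: abs_le_iff)
  qed (use False \<open>f s = 0\<close> nonneg in auto)
  then show ?thesis
    by simp
qed

lemma matrix_ode_zero_unique:
  fixes A :: "real \<Rightarrow> real^'n^'n" and X :: "real \<Rightarrow> real^'k^'n"
  assumes "continuous_on UNIV A"
    and deriv: "\<And>t. (X has_vector_derivative A t ** X t) (at t)"
    and "X s = 0"
  shows "X t = 0"
proof -
  have "compact (A ` {min s t..max s t})"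
    by (rule compact_continuous_image)
      (auto intro: continuous_on_subset[OF \<open>continuous_on UNIV A\<close>])
  then obtain L where L: "\<And>r. r \<in> {min s t..max s t} \<Longrightarrow> norm (A r) \<le> L"
    using compact_imp_bounded bounded_iff by (metis imageI)
  obtain K where "K > 0"
    and K: "\<And>(M::real^'n^'n) (N::real^'k^'n). norm (M ** N) \<le> norm M * norm N * K"
    using bounded_bilinear.pos_bounded[OF bounded_bilinear_matrix_mult] by metis
  have "X t \<bullet> X t = 0"
  proof (rule nonneg_vanishing_gronwall[where f = "\<lambda>r. X r \<bullet> X r" and s = s
        and f' = "\<lambda>r. 2 * (X r \<bullet> (A r ** X r))" and c = "2 * L * K"])
    fix r
    show "((\<lambda>r. X r \<bullet> X r) has_real_derivative 2 * (X r \<bullet> (A r ** X r))) (at r)"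
    proof -
      have "((\<lambda>r. X r \<bullet> X r) has_vector_derivative
          X r \<bullet> (A r ** X r) + (A r ** X r) \<bullet> X r) (at r)"
        by (rule bounded_bilinear.has_vector_derivative[OF bounded_bilinear_inner deriv deriv])
      then show ?thesis
        unfolding has_real_derivative_iff_has_vector_derivative by (simp add: inner_commute)
    qed
    assume r: "r \<in> {min s t..max s t}"
    have "\<bar>X r \<bullet> (A r ** X r)\<bar> \<le> norm (X r) * (norm (A r) * norm (X r) * K)"
      using Cauchy_Schwarz_ineq2 K mult_left_mono norm_ge_zero order_trans by metis
    also have "\<dots> \<le> norm (X r) * (L * norm (X r) * K)"
      using L[OF r] \<open>K > 0\<close>
      by (intro mult_left_mono mult_right_mono) (auto intro: order_trans[OF norm_ge_zero])
    also have "\<dots> = L * K * (X r \<bullet> X r)"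
      by (simp add: power2_norm_eq_inner[symmetric] power2_eq_square)
    finally show "\<bar>2 * (X r \<bullet> (A r ** X r))\<bar> \<le> 2 * L * K * (X r \<bullet> X r)"
      by simp
  qed (use \<open>X s = 0\<close> in auto)
  then show ?thesis
    by simp
qed

lemma evol_op_unique:
  assumes "continuous_on UNIV A" and "evol_op A \<Psi>\<^sub>1" and "evol_op A \<Psi>\<^sub>2"
  shows "\<Psi>\<^sub>1 = \<Psi>\<^sub>2"
proof (intro ext)
  fix t s
  have "\<Psi>\<^sub>1 t s - \<Psi>\<^sub>2 t s = 0"
  proof (rule matrix_ode_zero_unique[OF \<open>continuous_on UNIV A\<close>,
        where X = "\<lambda>r. \<Psi>\<^sub>1 r s - \<Psi>\<^sub>2 r s" and s = s])
    fix r
    have "((\<lambda>r. \<Psi>\<^sub>1 r s) has_vector_derivative A r ** \<Psi>\<^sub>1 r s) (at r)"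
      "((\<lambda>r. \<Psi>\<^sub>2 r s) has_vector_derivative A r ** \<Psi>\<^sub>2 r s) (at r)"
      using assms(2,3) unfolding evol_op_def by blast+
    from has_vector_derivative_diff[OF this]
    show "((\<lambda>r. \<Psi>\<^sub>1 r s - \<Psi>\<^sub>2 r s) has_vector_derivative A r ** (\<Psi>\<^sub>1 r s - \<Psi>\<^sub>2 r s)) (at r)"
      by (simp add: matrix_diff_ldistrib)
  qed (use assms(2,3) in \<open>simp add: evol_op_def\<close>)
  then show "\<Psi>\<^sub>1 t s = \<Psi>\<^sub>2 t s"
    by simp
qed

lemma evol_op_cocycle:
  assumes "continuous_on UNIV A" and "evol_op A \<Phi>"
  shows "\<Phi> t r ** \<Phi> r s = \<Phi> t s"
proof -
  have "\<Phi> t r ** \<Phi> r s - \<Phi> t s = 0"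
  proof (rule matrix_ode_zero_unique[OF \<open>continuous_on UNIV A\<close>,
        where X = "\<lambda>t. \<Phi> t r ** \<Phi> r s - \<Phi> t s" and s = r])
    fix t
    have deriv: "((\<lambda>t. \<Phi> t q) has_vector_derivative A t ** \<Phi> t q) (at t)" for q
      using \<open>evol_op A \<Phi>\<close> unfolding evol_op_def by blast
    have "((\<lambda>t. \<Phi> t r ** \<Phi> r s) has_vector_derivative
        \<Phi> t r ** 0 + (A t ** \<Phi> t r) ** \<Phi> r s) (at t)"
      by (rule bounded_bilinear.has_vector_derivative[OF bounded_bilinear_matrix_mult
            deriv has_vector_derivative_const])
    from has_vector_derivative_diff[OF this deriv[of s]]
    show "((\<lambda>t. \<Phi> t r ** \<Phi> r s - \<Phi> t s) has_vector_derivative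
        A t ** (\<Phi> t r ** \<Phi> r s - \<Phi> t s)) (at t)"
      by (simp add: matrix_diff_ldistrib matrix_mul_assoc)
  qed (use \<open>evol_op A \<Phi>\<close> in \<open>simp add: evol_op_def\<close>)
  then show ?thesis
    by simp
qed

section \<open>Growth rates and shifted evolution operators\<close>

lemma growth_rate_pos: "growth_rate \<mu> \<Longrightarrow> 0 < \<mu> t"
  unfolding growth_rate_def by auto

lemma growth_rate_zero: "growth_rate \<mu> \<Longrightarrow> \<mu> 0 = 1"
  unfolding growth_rate_def by auto

lemma growth_rate_mono: "growth_rate \<mu> \<Longrightarrow> s \<le> t \<Longrightarrow> \<mu> s \<le> \<mu> t"
  unfolding growth_rate_def by (meson strict_mono_less_eq)

lemma growth_rate_ge_one: "growth_rate \<mu> \<Longrightarrow> 0 \<le> t \<Longrightarrow> 1 \<le> \<mu> t"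
  using growth_rate_mono growth_rate_zero by metis

lemma growth_rate_le_one: "growth_rate \<mu> \<Longrightarrow> t \<le> 0 \<Longrightarrow> \<mu> t \<le> 1"
  using growth_rate_mono growth_rate_zero by metis

definition shifted_evol ::
  "(real \<Rightarrow> real) \<Rightarrow> (real \<Rightarrow> real \<Rightarrow> real^'n^'n) \<Rightarrow> real \<Rightarrow> real \<Rightarrow> real \<Rightarrow> real^'n^'n" where
  "shifted_evol \<mu> \<Psi> \<gamma> t s = (\<mu> t / \<mu> s) powr (- \<gamma>) *\<^sub>R \<Psi> t s"

lemma shifted_evol_add: "shifted_evol \<mu> (shifted_evol \<mu> \<Psi> \<gamma>) \<delta> = shifted_evol \<mu> \<Psi> (\<gamma> + \<delta>)"
proof -
  have "x powr (- \<delta>) * x powr (- \<gamma>) = x powr (- (\<gamma> + \<delta>))" for x :: real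
    by (metis add.commute minus_add powr_add)
  then show ?thesis
    by (simp add: fun_eq_iff shifted_evol_def)
qed

lemma shifted_evol_zero: "growth_rate \<mu> \<Longrightarrow> shifted_evol \<mu> \<Psi> 0 = \<Psi>"
  by (simp add: fun_eq_iff shifted_evol_def growth_rate_pos less_imp_neq[symmetric])

lemma ratio_powr_has_real_derivative:
  assumes pos: "\<And>t. 0 < \<mu> t" and deriv: "(\<mu> has_real_derivative d) (at t)"
  shows "((\<lambda>t. (\<mu> t / \<mu> s) powr a) has_real_derivative (\<mu> t / \<mu> s) powr a * (a * d / \<mu> t)) (at t)"
proof -
  have "(\<lambda>t. (\<mu> t / \<mu> s) powr a) = (\<lambda>t. exp (a * (ln (\<mu> t) - ln (\<mu> s))))"
    using pos by (simp add: fun_eq_iff powr_def ln_div less_imp_neq[symmetric])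
  moreover have "((\<lambda>t. exp (a * (ln (\<mu> t) - ln (\<mu> s)))) has_real_derivative
      exp (a * (ln (\<mu> t) - ln (\<mu> s))) * (a * (d / \<mu> t))) (at t)"
    using pos[of t] by (auto intro!: derivative_eq_intros deriv)
  ultimately show ?thesis
    using pos[of t] pos[of s] by (simp add: powr_def ln_div)
qed

lemma evol_op_shifted:
  assumes "diff_growth_rate \<mu>" and "evol_op C \<Psi>"
  shows "evol_op (\<lambda>t. C t - (\<gamma> * deriv \<mu> t / \<mu> t) *\<^sub>R mat 1) (shifted_evol \<mu> \<Psi> \<gamma>)"
  unfolding evol_op_def
proof (intro allI conjI)
  have growth: "growth_rate \<mu>"
    using assms(1) by (simp add: diff_growth_rate_def)
  fix s t
  show "shifted_evol \<mu> \<Psi> \<gamma> s s = mat 1"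
    using \<open>evol_op C \<Psi>\<close> growth_rate_pos[OF growth, of s] by (simp add: evol_op_def shifted_evol_def)
  have deriv_\<mu>: "(\<mu> has_real_derivative deriv \<mu> t) (at t)"
    using assms(1) by (simp add: diff_growth_rate_def DERIV_deriv_iff_real_differentiable)
  have deriv_\<Psi>: "((\<lambda>t. \<Psi> t s) has_vector_derivative C t ** \<Psi> t s) (at t)"
    using \<open>evol_op C \<Psi>\<close> by (simp add: evol_op_def)
  have "((\<lambda>t. shifted_evol \<mu> \<Psi> \<gamma> t s) has_vector_derivative
      (\<mu> t / \<mu> s) powr (- \<gamma>) *\<^sub>R (C t ** \<Psi> t s)
      + ((\<mu> t / \<mu> s) powr (- \<gamma>) * (- \<gamma> * deriv \<mu> t / \<mu> t)) *\<^sub>R \<Psi> t s) (at t)"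
    unfolding shifted_evol_def
    by (rule has_vector_derivative_scaleR[OF ratio_powr_has_real_derivative[OF
          growth_rate_pos[OF growth] deriv_\<mu>] deriv_\<Psi>])
  then show "((\<lambda>t. shifted_evol \<mu> \<Psi> \<gamma> t s) has_vector_derivative
      (C t - (\<gamma> * deriv \<mu> t / \<mu> t) *\<^sub>R mat 1) ** shifted_evol \<mu> \<Psi> \<gamma> t s) (at t)"
    by (simp add: shifted_evol_def matrix_diff_rdistrib scalar_matrix_assoc[symmetric]
        matrix_scalar_ac algebra_simps)
qed

section \<open>Nonuniform \<open>\<mu>\<close>-dichotomies\<close>

lemma mnorm_nonneg: "0 \<le> mnorm (M::real^'n^'n)"
  unfolding mnorm_def by (rule onorm_pos_le[OF matrix_vector_mul_bounded_linear])

lemma norm_matrix_vector_le_mnorm: "norm ((M::real^'n^'n) *v x) \<le> mnorm M * norm x"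
  unfolding mnorm_def by (rule onorm[OF matrix_vector_mul_bounded_linear])

lemma mnorm_scaleR: "mnorm (c *\<^sub>R (M::real^'n^'n)) = \<bar>c\<bar> * mnorm M"
proof -
  have "(\<lambda>x. (c *\<^sub>R M) *v x) = (\<lambda>x. c *\<^sub>R (M *v x))"
    by (simp add: scaleR_matrix_vector_assoc)
  then show ?thesis
    unfolding mnorm_def using onorm_scaleR[OF matrix_vector_mul_bounded_linear[of M]] by simp
qed

definition stable_bound :: "(real \<Rightarrow> real) \<Rightarrow> (real \<Rightarrow> real \<Rightarrow> real^'n^'n) \<Rightarrow>
    (real \<Rightarrow> real^'n^'n) \<Rightarrow> real \<Rightarrow> real \<Rightarrow> real \<Rightarrow> bool" where
  "stable_bound \<mu> \<Psi> P K \<alpha> \<theta> \<longleftrightarrow> (\<forall>t s. s \<le> t \<longrightarrow>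
     mnorm (\<Psi> t s ** P s) \<le> K * (\<mu> t / \<mu> s) powr \<alpha> * \<mu> s powr (sgn s * \<theta>))"

definition unstable_bound :: "(real \<Rightarrow> real) \<Rightarrow> (real \<Rightarrow> real \<Rightarrow> real^'n^'n) \<Rightarrow>
    (real \<Rightarrow> real^'n^'n) \<Rightarrow> real \<Rightarrow> real \<Rightarrow> real \<Rightarrow> bool" where
  "unstable_bound \<mu> \<Psi> P K \<beta> \<nu> \<longleftrightarrow> (\<forall>t s. t \<le> s \<longrightarrow>
     mnorm (\<Psi> t s ** (mat 1 - P s)) \<le> K * (\<mu> t / \<mu> s) powr \<beta> * \<mu> s powr (sgn s * \<nu>))"

definition mu_dichotomy :: "(real \<Rightarrow> real) \<Rightarrow> (real \<Rightarrow> real \<Rightarrow> real^'n^'n) \<Rightarrow>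
    (real \<Rightarrow> real^'n^'n) \<Rightarrow> real \<Rightarrow> real \<Rightarrow> real \<Rightarrow> real \<Rightarrow> real \<Rightarrow> bool" where
  "mu_dichotomy \<mu> \<Psi> P K \<alpha> \<beta> \<theta> \<nu> \<longleftrightarrow>
     (\<forall>t. P t ** P t = P t) \<and> (\<forall>t s. P t ** \<Psi> t s = \<Psi> t s ** P s)
     \<and> K \<ge> 1 \<and> \<alpha> < 0 \<and> \<beta> > 0 \<and> \<theta> \<ge> 0 \<and> \<nu> \<ge> 0 \<and> \<alpha> + \<theta> < 0 \<and> \<beta> - \<nu> > 0
     \<and> stable_bound \<mu> \<Psi> P K \<alpha> \<theta> \<and> unstable_bound \<mu> \<Psi> P K \<beta> \<nu>"

lemma NmuD_iff_mu_dichotomy: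
  "NmuD \<mu> C \<longleftrightarrow> (\<exists>\<Psi>. evol_op C \<Psi> \<and> (\<exists>P K \<alpha> \<beta> \<theta> \<nu>. mu_dichotomy \<mu> \<Psi> P K \<alpha> \<beta> \<theta> \<nu>))"
  unfolding NmuD_def mu_dichotomy_def stable_bound_def unstable_bound_def ..

lemma mnorm_shifted_evol_mult:
  "growth_rate \<mu> \<Longrightarrow>
    mnorm (shifted_evol \<mu> \<Psi> \<delta> t s ** M) = (\<mu> t / \<mu> s) powr (- \<delta>) * mnorm (\<Psi> t s ** M)"
  unfolding shifted_evol_def scalar_matrix_assoc[symmetric] mnorm_scaleR
  by (simp add: growth_rate_pos less_imp_le)

lemma stable_bound_shifted:
  assumes "growth_rate \<mu>" and "stable_bound \<mu> \<Psi> P K \<alpha> \<theta>"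
  shows "stable_bound \<mu> (shifted_evol \<mu> \<Psi> \<delta>) P K (\<alpha> - \<delta>) \<theta>"
  unfolding stable_bound_def
proof (intro allI impI)
  fix t s :: real assume "s \<le> t"
  have "mnorm (shifted_evol \<mu> \<Psi> \<delta> t s ** P s)
      \<le> (\<mu> t / \<mu> s) powr (- \<delta>) * (K * (\<mu> t / \<mu> s) powr \<alpha> * \<mu> s powr (sgn s * \<theta>))"
    using assms \<open>s \<le> t\<close> unfolding stable_bound_def mnorm_shifted_evol_mult[OF assms(1)]
    by (intro mult_left_mono) auto
  then show "mnorm (shifted_evol \<mu> \<Psi> \<delta> t s ** P s)
      \<le> K * (\<mu> t / \<mu> s) powr (\<alpha> - \<delta>) * \<mu> s powr (sgn s * \<theta>)"
    using powr_add[of "\<mu> t / \<mu> s" "- \<delta>" \<alpha>] by (simp add: mult_ac)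
qed

lemma unstable_bound_shifted:
  assumes "growth_rate \<mu>" and "unstable_bound \<mu> \<Psi> P K \<beta> \<nu>"
  shows "unstable_bound \<mu> (shifted_evol \<mu> \<Psi> \<delta>) P K (\<beta> - \<delta>) \<nu>"
  unfolding unstable_bound_def
proof (intro allI impI)
  fix t s :: real assume "t \<le> s"
  have "mnorm (shifted_evol \<mu> \<Psi> \<delta> t s ** (mat 1 - P s))
      \<le> (\<mu> t / \<mu> s) powr (- \<delta>) * (K * (\<mu> t / \<mu> s) powr \<beta> * \<mu> s powr (sgn s * \<nu>))"
    using assms \<open>t \<le> s\<close> unfolding unstable_bound_def mnorm_shifted_evol_mult[OF assms(1)]
    by (intro mult_left_mono) auto
  then show "mnorm (shifted_evol \<mu> \<Psi> \<delta> t s ** (mat 1 - P s))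
      \<le> K * (\<mu> t / \<mu> s) powr (\<beta> - \<delta>) * \<mu> s powr (sgn s * \<nu>)"
    using powr_add[of "\<mu> t / \<mu> s" "- \<delta>" \<beta>] by (simp add: mult_ac)
qed

lemma stable_bound_mono: "stable_bound \<mu> \<Psi> P K \<alpha> \<theta> \<Longrightarrow> K \<le> K' \<Longrightarrow> stable_bound \<mu> \<Psi> P K' \<alpha> \<theta>"
  unfolding stable_bound_def by (meson mult_right_mono order_trans powr_ge_zero)

lemma unstable_bound_mono: "unstable_bound \<mu> \<Psi> P K \<beta> \<nu> \<Longrightarrow> K \<le> K' \<Longrightarrow> unstable_bound \<mu> \<Psi> P K' \<beta> \<nu>"
  unfolding unstable_bound_def by (meson mult_right_mono order_trans powr_ge_zero)

lemma shifted_evol_commute_iff: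
  assumes "growth_rate \<mu>"
  shows "P t ** shifted_evol \<mu> \<Psi> \<delta> t s = shifted_evol \<mu> \<Psi> \<delta> t s ** P s
    \<longleftrightarrow> P t ** \<Psi> t s = \<Psi> t s ** P s"
  using growth_rate_pos[OF assms]
  by (simp add: shifted_evol_def scalar_matrix_assoc[symmetric] matrix_scalar_ac less_imp_neq[symmetric])

lemma mu_dichotomy_shifted_near:
  assumes "growth_rate \<mu>" and dich: "mu_dichotomy \<mu> \<Psi> P K \<alpha> \<beta> \<theta> \<nu>"
    and "\<bar>\<delta>\<bar> < min (- (\<alpha> + \<theta>)) (\<beta> - \<nu>)"
  shows "mu_dichotomy \<mu> (shifted_evol \<mu> \<Psi> \<delta>) P K (\<alpha> - \<delta>) (\<beta> - \<delta>) \<theta> \<nu>"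
proof -
  have "\<alpha> - \<delta> < 0" "\<beta> - \<delta> > 0" "\<alpha> - \<delta> + \<theta> < 0" "\<beta> - \<delta> - \<nu> > 0"
    using dich assms(3) unfolding mu_dichotomy_def by linarith+
  then show ?thesis
    using dich stable_bound_shifted[OF assms(1)] unstable_bound_shifted[OF assms(1)]
    unfolding mu_dichotomy_def shifted_evol_commute_iff[OF assms(1)] by blast
qed

lemma mu_dichotomy_shifted_between:
  assumes "growth_rate \<mu>"
    and dich\<^sub>1: "mu_dichotomy \<mu> \<Psi> P K\<^sub>1 \<alpha>\<^sub>1 \<beta>\<^sub>1 \<theta>\<^sub>1 \<nu>\<^sub>1"
    and dich\<^sub>2: "mu_dichotomy \<mu> (shifted_evol \<mu> \<Psi> \<delta>) P K\<^sub>2 \<alpha>\<^sub>2 \<beta>\<^sub>2 \<theta>\<^sub>2 \<nu>\<^sub>2"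
    and "0 \<le> \<epsilon>" and "\<epsilon> \<le> \<delta>"
  shows "mu_dichotomy \<mu> (shifted_evol \<mu> \<Psi> \<epsilon>) P (max K\<^sub>1 K\<^sub>2) (\<alpha>\<^sub>1 - \<epsilon>) (\<beta>\<^sub>2 + \<delta> - \<epsilon>) \<theta>\<^sub>1 \<nu>\<^sub>2"
proof -
  have "stable_bound \<mu> (shifted_evol \<mu> \<Psi> \<epsilon>) P K\<^sub>1 (\<alpha>\<^sub>1 - \<epsilon>) \<theta>\<^sub>1"
    using dich\<^sub>1 stable_bound_shifted[OF assms(1)] unfolding mu_dichotomy_def by blast
  then have stable: "stable_bound \<mu> (shifted_evol \<mu> \<Psi> \<epsilon>) P (max K\<^sub>1 K\<^sub>2) (\<alpha>\<^sub>1 - \<epsilon>) \<theta>\<^sub>1"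
    by (rule stable_bound_mono) simp
  have "unstable_bound \<mu> (shifted_evol \<mu> (shifted_evol \<mu> \<Psi> \<delta>) (\<epsilon> - \<delta>)) P K\<^sub>2
      (\<beta>\<^sub>2 - (\<epsilon> - \<delta>)) \<nu>\<^sub>2"
    using dich\<^sub>2 unstable_bound_shifted[OF assms(1)] unfolding mu_dichotomy_def by blast
  then have "unstable_bound \<mu> (shifted_evol \<mu> \<Psi> \<epsilon>) P K\<^sub>2 (\<beta>\<^sub>2 + \<delta> - \<epsilon>) \<nu>\<^sub>2"
    by (simp add: shifted_evol_add algebra_simps)
  then have unstable: "unstable_bound \<mu> (shifted_evol \<mu> \<Psi> \<epsilon>) P (max K\<^sub>1 K\<^sub>2) (\<beta>\<^sub>2 + \<delta> - \<epsilon>) \<nu>\<^sub>2"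
    by (rule unstable_bound_mono) simp
  have "\<alpha>\<^sub>1 - \<epsilon> < 0" "\<beta>\<^sub>2 + \<delta> - \<epsilon> > 0" "\<alpha>\<^sub>1 - \<epsilon> + \<theta>\<^sub>1 < 0" "\<beta>\<^sub>2 + \<delta> - \<epsilon> - \<nu>\<^sub>2 > 0"
    "max K\<^sub>1 K\<^sub>2 \<ge> 1"
    using dich\<^sub>1 dich\<^sub>2 assms(4,5) unfolding mu_dichotomy_def by auto
  with stable unstable dich\<^sub>1 dich\<^sub>2 show ?thesis
    unfolding mu_dichotomy_def shifted_evol_commute_iff[OF assms(1)] by blast
qed

section \<open>Projections and bounded orbits\<close>

lemma subspace_fixed_points: "subspace {\<xi>::real^'n. M *v \<xi> = \<xi>}"
  unfolding subspace_def by (auto simp: matrix_vector_right_distrib matrix_vector_mult_scaleR)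

lemma subspace_matrix_kernel: "subspace {\<xi>::real^'n. M *v \<xi> = 0}"
  unfolding subspace_def by (auto simp: matrix_vector_right_distrib matrix_vector_mult_scaleR)

lemma dim_fixed_points_add_dim_kernel:
  fixes P :: "real^'n^'n"
  assumes "P ** P = P"
  shows "dim {\<xi>. P *v \<xi> = \<xi>} + dim {\<xi>. P *v \<xi> = 0} = dim (UNIV :: (real^'n) set)"
proof -
  have idem: "P *v (P *v x) = P *v x" for x
    using assms by (simp add: matrix_vector_mul_assoc)
  have "z = P *v z + (z - P *v z) \<and> P *v (z - P *v z) = 0" for z
    by (simp add: idem matrix_vector_mult_diff_distrib)
  then have "{x + y |x y. x \<in> {\<xi>. P *v \<xi> = \<xi>} \<and> y \<in> {\<xi>. P *v \<xi> = 0}} = UNIV"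
    by (fastforce simp: idem)
  moreover have "{\<xi>. P *v \<xi> = \<xi>} \<inter> {\<xi>. P *v \<xi> = 0} = {0}"
    by auto
  ultimately show ?thesis
    using dim_sums_Int[OF subspace_fixed_points subspace_matrix_kernel, of P P] by simp
qed

lemma projection_eqI:
  fixes P Q :: "real^'n^'n"
  assumes "P ** P = P" "Q ** Q = Q"
    and "{\<xi>. P *v \<xi> = \<xi>} = {\<xi>. Q *v \<xi> = \<xi>}" "{\<xi>. P *v \<xi> = 0} = {\<xi>. Q *v \<xi> = 0}"
  shows "P = Q"
proof -
  have "P *v x = Q *v x" for x
  proof -
    have "Q *v (Q *v x) = Q *v x" "Q *v (x - Q *v x) = 0"
      using assms(2) by (simp_all add: matrix_vector_mul_assoc matrix_vector_mult_diff_distrib)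
    then have "P *v (Q *v x) = Q *v x" "P *v (x - Q *v x) = 0"
      using assms(3,4) by blast+
    then show ?thesis
      by (simp add: matrix_vector_mult_diff_distrib)
  qed
  then show ?thesis
    by (simp add: matrix_eq)
qed

lemma nontrivial_Int_iff_dim_less:
  fixes U\<^sub>1 U\<^sub>2 V :: "'a::euclidean_space set"
  assumes "subspace U\<^sub>1" "subspace U\<^sub>2" "subspace V" and "U\<^sub>1 \<subseteq> U\<^sub>2"
    and "U\<^sub>1 \<inter> V = {0}" and "dim U\<^sub>1 + dim V = dim (UNIV :: 'a set)"
  shows "(\<exists>\<xi>. \<xi> \<noteq> 0 \<and> \<xi> \<in> U\<^sub>2 \<inter> V) \<longleftrightarrow> dim U\<^sub>1 < dim U\<^sub>2"
proof
  assume "\<exists>\<xi>. \<xi> \<noteq> 0 \<and> \<xi> \<in> U\<^sub>2 \<inter> V"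
  then have "U\<^sub>1 \<noteq> U\<^sub>2"
    using assms(5) by auto
  then show "dim U\<^sub>1 < dim U\<^sub>2"
    using subspace_dim_equal[OF assms(1,2,4)] dim_subset[OF assms(4)] by linarith
next
  assume "dim U\<^sub>1 < dim U\<^sub>2"
  moreover have "dim {x + y |x y. x \<in> U\<^sub>2 \<and> y \<in> V} \<le> dim (UNIV :: 'a set)"
    by (rule dim_subset) simp
  ultimately have "dim (U\<^sub>2 \<inter> V) \<noteq> 0"
    using dim_sums_Int[OF assms(2,3)] assms(6) by linarith
  then show "\<exists>\<xi>. \<xi> \<noteq> 0 \<and> \<xi> \<in> U\<^sub>2 \<inter> V"
    by (auto simp del: dim_UNIV)
qed

text \<open>The component \<open>\<eta>\<close> of a bounded orbit in the kernel of \<open>R 0\<close> is recovered as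
  \<open>\<eta> = N t (1 - R t) M t \<eta>\<close>, whose norm tends to zero along \<open>F\<close>.\<close>
lemma bounded_orbits_eq_fixed_points:
  fixes M N R :: "real \<Rightarrow> real^'n^'n" and F :: "real filter"
  assumes idem: "R 0 ** R 0 = R 0"
    and comm: "\<And>t. R t ** M t = M t ** R 0"
    and inv: "\<And>t. N t ** M t = mat 1"
    and bound: "\<And>t. t \<in> S \<Longrightarrow> mnorm (M t ** R 0) \<le> K"
    and "F \<noteq> bot" and "\<forall>\<^sub>F t in F. t \<in> S"
    and decay: "\<forall>\<^sub>F t in F. mnorm (N t ** (mat 1 - R t)) \<le> c t" and "(c \<longlongrightarrow> 0) F"
  shows "{\<xi>. bdd_above ((\<lambda>t. norm (M t *v \<xi>)) ` S)} = {\<xi>. R 0 *v \<xi> = \<xi>}"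
proof (intro equalityI subsetI)
  have fixed_bound: "norm (M t *v \<xi>) \<le> K * norm \<xi>" if "t \<in> S" "R 0 *v \<xi> = \<xi>" for t \<xi>
  proof -
    have "norm (M t *v \<xi>) = norm ((M t ** R 0) *v \<xi>)"
      using that(2) by (simp add: matrix_vector_mul_assoc[symmetric])
    also have "\<dots> \<le> mnorm (M t ** R 0) * norm \<xi>"
      by (rule norm_matrix_vector_le_mnorm)
    also have "\<dots> \<le> K * norm \<xi>"
      using bound[OF that(1)] by (rule mult_right_mono) simp
    finally show ?thesis .
  qed
  fix \<xi>
  show "\<xi> \<in> {\<xi>. bdd_above ((\<lambda>t. norm (M t *v \<xi>)) ` S)}" if "\<xi> \<in> {\<xi>. R 0 *v \<xi> = \<xi>}"
    using fixed_bound that by (auto intro!: bdd_aboveI2)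
  assume "\<xi> \<in> {\<xi>. bdd_above ((\<lambda>t. norm (M t *v \<xi>)) ` S)}"
  then obtain B where B: "\<And>t. t \<in> S \<Longrightarrow> norm (M t *v \<xi>) \<le> B"
    by (auto simp: bdd_above_def)
  define \<eta> where "\<eta> = \<xi> - R 0 *v \<xi>"
  define C where "C = B + K * norm (R 0 *v \<xi>)"
  have "R 0 *v (R 0 *v \<xi>) = R 0 *v \<xi>"
    using idem by (simp add: matrix_vector_mul_assoc)
  then have "R 0 *v \<eta> = 0"
    by (simp add: \<eta>_def matrix_vector_mult_diff_distrib)
  have orbit_bound: "norm (M t *v \<eta>) \<le> C" if "t \<in> S" for t
    using norm_triangle_ineq4[of "M t *v \<xi>" "M t *v (R 0 *v \<xi>)"] B[OF that]
      fixed_bound[OF that \<open>R 0 *v (R 0 *v \<xi>) = R 0 *v \<xi>\<close>]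
    by (simp add: \<eta>_def C_def matrix_vector_mult_diff_distrib)
  have recover: "\<eta> = (N t ** (mat 1 - R t)) *v (M t *v \<eta>)" for t
  proof -
    have "R t *v (M t *v \<eta>) = M t *v (R 0 *v \<eta>)"
      by (simp add: matrix_vector_mul_assoc comm)
    then have "R t *v (M t *v \<eta>) = 0"
      using \<open>R 0 *v \<eta> = 0\<close> by simp
    then have "(N t ** (mat 1 - R t)) *v (M t *v \<eta>) = N t *v (M t *v \<eta>)"
      by (simp add: matrix_vector_mul_assoc[symmetric] matrix_vector_mult_diff_rdistrib)
    then show ?thesis
      by (simp add: matrix_vector_mul_assoc inv)
  qed
  have "\<forall>\<^sub>F t in F. norm \<eta> \<le> c t * C"
    using decay(1) \<open>\<forall>\<^sub>F t in F. t \<in> S\<close>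
  proof eventually_elim
    case (elim t)
    have "norm \<eta> \<le> mnorm (N t ** (mat 1 - R t)) * norm (M t *v \<eta>)"
      by (subst recover) (rule norm_matrix_vector_le_mnorm)
    also have "\<dots> \<le> c t * C"
      using elim orbit_bound[of t]
      by (intro mult_mono mnorm_nonneg) (auto intro: order_trans[OF norm_ge_zero]
          order_trans[OF mnorm_nonneg])
    finally show ?case .
  qed
  moreover have "((\<lambda>t. c t * C) \<longlongrightarrow> 0) F"
    using tendsto_mult_left_zero[OF \<open>(c \<longlongrightarrow> 0) F\<close>] .
  ultimately have "norm \<eta> \<le> 0"
    using tendsto_le[OF \<open>F \<noteq> bot\<close> _ tendsto_const] by blast
  then show "\<xi> \<in> {\<xi>. R 0 *v \<xi> = \<xi>}"
    by (simp add: \<eta>_def)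
qed

section \<open>The manifolds \<open>\<U>\<^sub>\<gamma>\<close> and \<open>\<V>\<^sub>\<gamma>\<close>\<close>

definition fiber :: "('a \<times> 'b) set \<Rightarrow> 'a \<Rightarrow> 'b set" where
  "fiber W s = {\<xi>. (s, \<xi>) \<in> W}"

lemma rank_im_eq_dim_fiber: "rank_im W = dim (fiber W 0)"
  unfolding rank_im_def fiber_def ..

lemma Uset_mono:
  assumes "growth_rate \<mu>" and "\<gamma>\<^sub>1 \<le> \<gamma>\<^sub>2"
  shows "Uset \<mu> \<Phi> \<gamma>\<^sub>1 \<subseteq> Uset \<mu> \<Phi> \<gamma>\<^sub>2"
proof safe
  fix s \<xi> assume "(s, \<xi>) \<in> Uset \<mu> \<Phi> \<gamma>\<^sub>1"
  then obtain B where B: "\<And>t. 0 \<le> t \<Longrightarrow> norm (\<Phi> t s *v \<xi>) * \<mu> t powr (- \<gamma>\<^sub>1) \<le> B"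
    unfolding Uset_def bdd_above_def by auto
  have "norm (\<Phi> t s *v \<xi>) * \<mu> t powr (- \<gamma>\<^sub>2) \<le> B" if "0 \<le> t" for t
  proof -
    have "\<mu> t powr (- \<gamma>\<^sub>2) \<le> \<mu> t powr (- \<gamma>\<^sub>1)"
      using assms growth_rate_ge_one[OF assms(1) that] by (intro powr_mono) auto
    then show ?thesis
      using B[OF that] by (meson mult_left_mono norm_ge_zero order_trans)
  qed
  then show "(s, \<xi>) \<in> Uset \<mu> \<Phi> \<gamma>\<^sub>2"
    unfolding Uset_def by (auto intro!: bdd_aboveI2)
qed

lemma Vset_antimono:
  assumes "growth_rate \<mu>" and "\<gamma>\<^sub>1 \<le> \<gamma>\<^sub>2"
  shows "Vset \<mu> \<Phi> \<gamma>\<^sub>2 \<subseteq> Vset \<mu> \<Phi> \<gamma>\<^sub>1"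
proof safe
  fix s \<xi> assume "(s, \<xi>) \<in> Vset \<mu> \<Phi> \<gamma>\<^sub>2"
  then obtain B where B: "\<And>t. t \<le> 0 \<Longrightarrow> norm (\<Phi> t s *v \<xi>) * \<mu> t powr (- \<gamma>\<^sub>2) \<le> B"
    unfolding Vset_def bdd_above_def by auto
  have "norm (\<Phi> t s *v \<xi>) * \<mu> t powr (- \<gamma>\<^sub>1) \<le> B" if "t \<le> 0" for t
  proof -
    have "\<mu> t powr (- \<gamma>\<^sub>1) \<le> \<mu> t powr (- \<gamma>\<^sub>2)"
      using assms growth_rate_le_one[OF assms(1) that] growth_rate_pos[OF assms(1), of t]
      by (intro powr_mono') auto
    then show ?thesis
      using B[OF that] by (meson mult_left_mono norm_ge_zero order_trans)
  qed
  then show "(s, \<xi>) \<in> Vset \<mu> \<Phi> \<gamma>\<^sub>1"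
    unfolding Vset_def by (auto intro!: bdd_aboveI2)
qed

lemma norm_shifted_evol_from_zero:
  "growth_rate \<mu> \<Longrightarrow>
    norm (shifted_evol \<mu> \<Psi> \<gamma> t 0 *v \<xi>) = norm (\<Psi> t 0 *v \<xi>) * \<mu> t powr (- \<gamma>)"
  by (simp add: shifted_evol_def growth_rate_zero scaleR_matrix_vector_assoc[symmetric] mult.commute)

lemma fiber_Uset_eq:
  "growth_rate \<mu> \<Longrightarrow>
    fiber (Uset \<mu> \<Phi> \<gamma>) 0 = {\<xi>. bdd_above ((\<lambda>t. norm (shifted_evol \<mu> \<Phi> \<gamma> t 0 *v \<xi>)) ` {0..})}"
  by (simp add: fiber_def Uset_def norm_shifted_evol_from_zero)

lemma fiber_Vset_eq:
  "growth_rate \<mu> \<Longrightarrow>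
    fiber (Vset \<mu> \<Phi> \<gamma>) 0 = {\<xi>. bdd_above ((\<lambda>t. norm (shifted_evol \<mu> \<Phi> \<gamma> t 0 *v \<xi>)) ` {..0})}"
  by (simp add: fiber_def Vset_def norm_shifted_evol_from_zero)

lemma growth_rate_powr_from_zero:
  "growth_rate \<mu> \<Longrightarrow> (\<mu> 0 / \<mu> t) powr a * \<mu> t powr b = \<mu> t powr (b - a)"
  using growth_rate_pos[of \<mu> t]
  by (simp add: growth_rate_zero powr_diff divide_inverse inverse_powr mult.commute)

lemma projection_complement: "(P::real^'n^'n) ** P = P \<Longrightarrow> (mat 1 - P) ** (mat 1 - P) = mat 1 - P"
  by (simp add: matrix_diff_ldistrib matrix_diff_rdistrib)

locale growth_rate_linear_system =
  fixes A :: "real \<Rightarrow> real^'n^'n" and \<Phi> :: "real \<Rightarrow> real \<Rightarrow> real^'n^'n"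
    and \<mu> :: "real \<Rightarrow> real"
  assumes continuous_A: "continuous_on UNIV A"
    and evol_op_A: "evol_op A \<Phi>"
    and diff_growth_rate: "diff_growth_rate \<mu>"
begin

lemma growth_rate: "growth_rate \<mu>"
  using diff_growth_rate by (simp add: diff_growth_rate_def)

lemma evol_inverse: "\<Phi> s t ** \<Phi> t s = mat 1"
  using evol_op_cocycle[OF continuous_A evol_op_A, of s t s] evol_op_A by (simp add: evol_op_def)

lemma shifted_evol_inverse: "shifted_evol \<mu> \<Phi> \<gamma> s t ** shifted_evol \<mu> \<Phi> \<gamma> t s = mat 1"
proof -
  have "(\<mu> t / \<mu> s) powr (- \<gamma>) * (\<mu> s / \<mu> t) powr (- \<gamma>) = 1"
    using growth_rate_pos[OF growth_rate, of s] growth_rate_pos[OF growth_rate, of t]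
    by (simp add: powr_mult[symmetric])
  then show ?thesis
    by (simp add: shifted_evol_def scalar_matrix_assoc[symmetric] matrix_scalar_ac evol_inverse)
qed

lemma evol_op_shifted_iff:
  "evol_op (\<lambda>t. A t - (\<gamma> * deriv \<mu> t / \<mu> t) *\<^sub>R mat 1) \<Psi> \<longleftrightarrow> \<Psi> = shifted_evol \<mu> \<Phi> \<gamma>"
proof
  assume "evol_op (\<lambda>t. A t - (\<gamma> * deriv \<mu> t / \<mu> t) *\<^sub>R mat 1) \<Psi>"
  from evol_op_shifted[OF diff_growth_rate this, of "- \<gamma>"]
  have "evol_op A (shifted_evol \<mu> \<Psi> (- \<gamma>))"
    by (simp add: algebra_simps)
  then have "shifted_evol \<mu> \<Psi> (- \<gamma>) = \<Phi>"
    by (rule evol_op_unique[OF continuous_A _ evol_op_A])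
  then show "\<Psi> = shifted_evol \<mu> \<Phi> \<gamma>"
    by (metis add.left_inverse shifted_evol_add shifted_evol_zero[OF growth_rate])
qed (use evol_op_shifted[OF diff_growth_rate evol_op_A] in simp)

lemma rhoND_iff_mu_dichotomy:
  "\<gamma> \<in> rhoND \<mu> A \<longleftrightarrow> (\<exists>P K \<alpha> \<beta> \<theta> \<nu>. mu_dichotomy \<mu> (shifted_evol \<mu> \<Phi> \<gamma>) P K \<alpha> \<beta> \<theta> \<nu>)"
  unfolding rhoND_def SigmaND_def NmuD_iff_mu_dichotomy evol_op_shifted_iff by simp

lemma fiber_Uset_mu_dichotomy:
  assumes dich: "mu_dichotomy \<mu> (shifted_evol \<mu> \<Phi> \<gamma>) P K \<alpha> \<beta> \<theta> \<nu>"
  shows "fiber (Uset \<mu> \<Phi> \<gamma>) 0 = {\<xi>. P 0 *v \<xi> = \<xi>}"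
proof -
  have stable: "stable_bound \<mu> (shifted_evol \<mu> \<Phi> \<gamma>) P K \<alpha> \<theta>"
    and unstable: "unstable_bound \<mu> (shifted_evol \<mu> \<Phi> \<gamma>) P K \<beta> \<nu>"
    and "K \<ge> 1" "\<alpha> < 0" "\<nu> < \<beta>"
    using dich by (simp_all add: mu_dichotomy_def)
  show ?thesis
    unfolding fiber_Uset_eq[OF growth_rate]
  proof (rule bounded_orbits_eq_fixed_points[where N = "\<lambda>t. shifted_evol \<mu> \<Phi> \<gamma> 0 t"
        and F = at_top and c = "\<lambda>t. K * \<mu> t powr (\<nu> - \<beta>)"])
    show "P 0 ** P 0 = P 0" "\<And>t. P t ** shifted_evol \<mu> \<Phi> \<gamma> t 0 = shifted_evol \<mu> \<Phi> \<gamma> t 0 ** P 0"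
      using dich by (simp_all add: mu_dichotomy_def)
    show "shifted_evol \<mu> \<Phi> \<gamma> 0 t ** shifted_evol \<mu> \<Phi> \<gamma> t 0 = mat 1" for t
      by (rule shifted_evol_inverse)
    show "mnorm (shifted_evol \<mu> \<Phi> \<gamma> t 0 ** P 0) \<le> K" if "t \<in> {0..}" for t
    proof -
      have "\<mu> t powr \<alpha> \<le> \<mu> t powr 0"
        using dich growth_rate_ge_one[OF growth_rate, of t] that
        by (intro powr_mono) (auto simp: mu_dichotomy_def)
      then have "\<mu> t powr \<alpha> \<le> 1"
        using growth_rate_pos[OF growth_rate, of t] by simp
      moreover have "mnorm (shifted_evol \<mu> \<Phi> \<gamma> t 0 ** P 0) \<le> K * \<mu> t powr \<alpha>"
        using stable[unfolded stable_bound_def, rule_format, of 0 t] that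
        by (simp add: growth_rate_zero[OF growth_rate])
      ultimately show ?thesis
        using \<open>K \<ge> 1\<close> by (smt (verit) mult_left_le)
    qed
    show "\<forall>\<^sub>F t in at_top. mnorm (shifted_evol \<mu> \<Phi> \<gamma> 0 t ** (mat 1 - P t)) \<le> K * \<mu> t powr (\<nu> - \<beta>)"
      using eventually_gt_at_top[of 0]
    proof eventually_elim
      case (elim t)
      then show ?case
        using unstable[unfolded unstable_bound_def, rule_format, of 0 t]
          growth_rate_powr_from_zero[OF growth_rate, of t \<beta> \<nu>]
        by (simp add: mult.assoc)
    qed
    have "((\<lambda>t. \<mu> t powr (\<nu> - \<beta>)) \<longlongrightarrow> 0) at_top"
      using \<open>\<nu> < \<beta>\<close> growth_rate by (intro tendsto_neg_powr) (auto simp: growth_rate_def)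
    then show "((\<lambda>t. K * \<mu> t powr (\<nu> - \<beta>)) \<longlongrightarrow> 0) at_top"
      by (rule tendsto_mult_right_zero)
  qed (auto simp: eventually_ge_at_top)
qed

lemma fiber_Vset_mu_dichotomy:
  assumes dich: "mu_dichotomy \<mu> (shifted_evol \<mu> \<Phi> \<gamma>) P K \<alpha> \<beta> \<theta> \<nu>"
  shows "fiber (Vset \<mu> \<Phi> \<gamma>) 0 = {\<xi>. P 0 *v \<xi> = 0}"
proof -
  have stable: "stable_bound \<mu> (shifted_evol \<mu> \<Phi> \<gamma>) P K \<alpha> \<theta>"
    and unstable: "unstable_bound \<mu> (shifted_evol \<mu> \<Phi> \<gamma>) P K \<beta> \<nu>"
    and "K \<ge> 1" "\<beta> > 0" "\<alpha> + \<theta> < 0"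
    using dich by (simp_all add: mu_dichotomy_def)
  have "fiber (Vset \<mu> \<Phi> \<gamma>) 0 = {\<xi>. (mat 1 - P 0) *v \<xi> = \<xi>}"
    unfolding fiber_Vset_eq[OF growth_rate]
  proof (rule bounded_orbits_eq_fixed_points[where N = "\<lambda>t. shifted_evol \<mu> \<Phi> \<gamma> 0 t"
        and F = at_bot and c = "\<lambda>t. K * \<mu> t powr (- \<theta> - \<alpha>)"])
    show "(mat 1 - P 0) ** (mat 1 - P 0) = mat 1 - P 0"
      using dich by (simp add: mu_dichotomy_def projection_complement)
    show "(mat 1 - P t) ** shifted_evol \<mu> \<Phi> \<gamma> t 0 = shifted_evol \<mu> \<Phi> \<gamma> t 0 ** (mat 1 - P 0)" for t
      using dich by (simp add: mu_dichotomy_def matrix_diff_ldistrib matrix_diff_rdistrib)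
    show "shifted_evol \<mu> \<Phi> \<gamma> 0 t ** shifted_evol \<mu> \<Phi> \<gamma> t 0 = mat 1" for t
      by (rule shifted_evol_inverse)
    show "mnorm (shifted_evol \<mu> \<Phi> \<gamma> t 0 ** (mat 1 - P 0)) \<le> K" if "t \<in> {..0}" for t
    proof -
      have "\<mu> t powr \<beta> \<le> 1 powr \<beta>"
        using \<open>\<beta> > 0\<close> growth_rate_le_one[OF growth_rate, of t] growth_rate_pos[OF growth_rate, of t] that
        by (intro powr_mono2) auto
      moreover have "mnorm (shifted_evol \<mu> \<Phi> \<gamma> t 0 ** (mat 1 - P 0)) \<le> K * \<mu> t powr \<beta>"
        using unstable[unfolded unstable_bound_def, rule_format, of t 0] that
        by (simp add: growth_rate_zero[OF growth_rate])
      ultimately show ?thesis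
        using \<open>K \<ge> 1\<close> by (smt (verit) mult_left_le powr_one_eq_one)
    qed
    show "\<forall>\<^sub>F t in at_bot. mnorm (shifted_evol \<mu> \<Phi> \<gamma> 0 t ** (mat 1 - (mat 1 - P t)))
        \<le> K * \<mu> t powr (- \<theta> - \<alpha>)"
      using eventually_gt_at_bot[of 0]
    proof eventually_elim
      case (elim t)
      then show ?case
        using stable[unfolded stable_bound_def, rule_format, of t 0]
          growth_rate_powr_from_zero[OF growth_rate, of t \<alpha> "- \<theta>"]
        by (simp add: mult.assoc)
    qed
    have "((\<lambda>t. \<mu> t powr (- \<theta> - \<alpha>)) \<longlongrightarrow> 0) at_bot"
      using \<open>\<alpha> + \<theta> < 0\<close> growth_rate growth_rate_pos[OF growth_rate]
      by (intro tendsto_zero_powrI) (auto simp: growth_rate_def less_imp_le)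
    then show "((\<lambda>t. K * \<mu> t powr (- \<theta> - \<alpha>)) \<longlongrightarrow> 0) at_bot"
      by (rule tendsto_mult_right_zero)
  qed (auto simp: eventually_le_at_bot)
  then show ?thesis
    by (simp add: matrix_vector_mult_diff_rdistrib)
qed

lemma fibers_complementary:
  assumes "\<gamma> \<in> rhoND \<mu> A"
  shows "subspace (fiber (Uset \<mu> \<Phi> \<gamma>) 0)" and "subspace (fiber (Vset \<mu> \<Phi> \<gamma>) 0)"
    and "fiber (Uset \<mu> \<Phi> \<gamma>) 0 \<inter> fiber (Vset \<mu> \<Phi> \<gamma>) 0 = {0}"
    and "dim (fiber (Uset \<mu> \<Phi> \<gamma>) 0) + dim (fiber (Vset \<mu> \<Phi> \<gamma>) 0) = dim (UNIV :: (real^'n) set)"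
proof -
  obtain P K \<alpha> \<beta> \<theta> \<nu> where dich: "mu_dichotomy \<mu> (shifted_evol \<mu> \<Phi> \<gamma>) P K \<alpha> \<beta> \<theta> \<nu>"
    using assms rhoND_iff_mu_dichotomy by blast
  note fibers = fiber_Uset_mu_dichotomy[OF dich] fiber_Vset_mu_dichotomy[OF dich]
  show "subspace (fiber (Uset \<mu> \<Phi> \<gamma>) 0)" "subspace (fiber (Vset \<mu> \<Phi> \<gamma>) 0)"
    unfolding fibers by (rule subspace_fixed_points subspace_matrix_kernel)+
  show "fiber (Uset \<mu> \<Phi> \<gamma>) 0 \<inter> fiber (Vset \<mu> \<Phi> \<gamma>) 0 = {0}"
    unfolding fibers by auto
  show "dim (fiber (Uset \<mu> \<Phi> \<gamma>) 0) + dim (fiber (Vset \<mu> \<Phi> \<gamma>) 0) = dim (UNIV :: (real^'n) set)"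
    unfolding fibers using dich by (simp add: mu_dichotomy_def dim_fixed_points_add_dim_kernel)
qed

lemma Uset_iff_fiber:
  "(s, \<xi>) \<in> Uset \<mu> \<Phi> \<gamma> \<longleftrightarrow> \<Phi> 0 s *v \<xi> \<in> fiber (Uset \<mu> \<Phi> \<gamma>) 0"
  unfolding fiber_def Uset_def
  by (simp add: matrix_vector_mul_assoc evol_op_cocycle[OF continuous_A evol_op_A])

lemma Vset_iff_fiber:
  "(s, \<xi>) \<in> Vset \<mu> \<Phi> \<gamma> \<longleftrightarrow> \<Phi> 0 s *v \<xi> \<in> fiber (Vset \<mu> \<Phi> \<gamma>) 0"
  unfolding fiber_def Vset_def
  by (simp add: matrix_vector_mul_assoc evol_op_cocycle[OF continuous_A evol_op_A])

lemma Uset_Int_Vset_nontrivial_iff: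
  "Uset \<mu> \<Phi> \<gamma>\<^sub>2 \<inter> Vset \<mu> \<Phi> \<gamma>\<^sub>1 \<noteq> UNIV \<times> {0}
    \<longleftrightarrow> (\<exists>\<xi>. \<xi> \<noteq> 0 \<and> \<xi> \<in> fiber (Uset \<mu> \<Phi> \<gamma>\<^sub>2) 0 \<inter> fiber (Vset \<mu> \<Phi> \<gamma>\<^sub>1) 0)"
proof
  have "UNIV \<times> {0} \<subseteq> Uset \<mu> \<Phi> \<gamma>\<^sub>2 \<inter> Vset \<mu> \<Phi> \<gamma>\<^sub>1"
    unfolding Uset_def Vset_def by auto
  moreover assume "Uset \<mu> \<Phi> \<gamma>\<^sub>2 \<inter> Vset \<mu> \<Phi> \<gamma>\<^sub>1 \<noteq> UNIV \<times> {0}"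
  ultimately obtain s \<xi> where "\<xi> \<noteq> 0" "(s, \<xi>) \<in> Uset \<mu> \<Phi> \<gamma>\<^sub>2" "(s, \<xi>) \<in> Vset \<mu> \<Phi> \<gamma>\<^sub>1"
    by auto
  moreover have "\<Phi> 0 s *v \<xi> \<noteq> 0"
    using \<open>\<xi> \<noteq> 0\<close> evol_inverse[of s 0] by (metis matrix_vector_mul_assoc matrix_vector_mul_lid
        matrix_vector_mult_0_right)
  ultimately show "\<exists>\<xi>. \<xi> \<noteq> 0 \<and> \<xi> \<in> fiber (Uset \<mu> \<Phi> \<gamma>\<^sub>2) 0 \<inter> fiber (Vset \<mu> \<Phi> \<gamma>\<^sub>1) 0"
    using Uset_iff_fiber Vset_iff_fiber by blast
qed (auto simp: fiber_def)

lemma mu_dichotomy_projection_eq: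
  assumes "mu_dichotomy \<mu> (shifted_evol \<mu> \<Phi> \<gamma>) P K \<alpha> \<beta> \<theta> \<nu>"
  shows "P t = \<Phi> t 0 ** P 0 ** \<Phi> 0 t"
proof -
  have "P t ** \<Phi> t 0 = \<Phi> t 0 ** P 0"
    using assms by (simp add: mu_dichotomy_def shifted_evol_commute_iff[OF growth_rate])
  then show ?thesis
    by (metis evol_inverse matrix_mul_assoc matrix_mul_rid)
qed

lemma fiber_Uset_locally_constant:
  assumes "\<gamma> \<in> rhoND \<mu> A"
  obtains e where "e > 0" and "\<And>\<gamma>'. \<bar>\<gamma>' - \<gamma>\<bar> < e \<Longrightarrow> fiber (Uset \<mu> \<Phi> \<gamma>') 0 = fiber (Uset \<mu> \<Phi> \<gamma>) 0"
proof -
  obtain P K \<alpha> \<beta> \<theta> \<nu> where dich: "mu_dichotomy \<mu> (shifted_evol \<mu> \<Phi> \<gamma>) P K \<alpha> \<beta> \<theta> \<nu>"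
    using assms rhoND_iff_mu_dichotomy by blast
  show ?thesis
  proof
    show "min (- (\<alpha> + \<theta>)) (\<beta> - \<nu>) > 0"
      using dich by (simp add: mu_dichotomy_def)
    fix \<gamma>' assume "\<bar>\<gamma>' - \<gamma>\<bar> < min (- (\<alpha> + \<theta>)) (\<beta> - \<nu>)"
    from mu_dichotomy_shifted_near[OF growth_rate dich this]
    have "mu_dichotomy \<mu> (shifted_evol \<mu> \<Phi> \<gamma>') P K (\<alpha> - (\<gamma>' - \<gamma>)) (\<beta> - (\<gamma>' - \<gamma>)) \<theta> \<nu>"
      by (simp add: shifted_evol_add)
    then show "fiber (Uset \<mu> \<Phi> \<gamma>') 0 = fiber (Uset \<mu> \<Phi> \<gamma>) 0"
      by (simp add: fiber_Uset_mu_dichotomy fiber_Uset_mu_dichotomy[OF dich])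
  qed
qed

lemma fiber_Uset_constant_on_resolvent_interval:
  assumes "\<gamma>\<^sub>1 \<le> \<gamma>\<^sub>2" and "{\<gamma>\<^sub>1..\<gamma>\<^sub>2} \<subseteq> rhoND \<mu> A"
  shows "fiber (Uset \<mu> \<Phi> \<gamma>\<^sub>1) 0 = fiber (Uset \<mu> \<Phi> \<gamma>\<^sub>2) 0"
proof -
  have "(\<lambda>\<gamma>. fiber (Uset \<mu> \<Phi> \<gamma>) 0) constant_on {\<gamma>\<^sub>1..\<gamma>\<^sub>2}"
  proof (rule locally_constant_imp_constant)
    fix \<gamma> assume "\<gamma> \<in> {\<gamma>\<^sub>1..\<gamma>\<^sub>2}"
    with assms(2) have "\<gamma> \<in> rhoND \<mu> A"
      by blast
    then obtain e where "e > 0"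
      and e: "\<And>\<gamma>'. \<bar>\<gamma>' - \<gamma>\<bar> < e \<Longrightarrow> fiber (Uset \<mu> \<Phi> \<gamma>') 0 = fiber (Uset \<mu> \<Phi> \<gamma>) 0"
      using fiber_Uset_locally_constant by metis
    show "\<exists>T. openin (top_of_set {\<gamma>\<^sub>1..\<gamma>\<^sub>2}) T \<and> \<gamma> \<in> T
        \<and> (\<forall>\<gamma>'\<in>T. fiber (Uset \<mu> \<Phi> \<gamma>') 0 = fiber (Uset \<mu> \<Phi> \<gamma>) 0)"
    proof (intro exI conjI ballI)
      show "openin (top_of_set {\<gamma>\<^sub>1..\<gamma>\<^sub>2}) ({\<gamma>\<^sub>1..\<gamma>\<^sub>2} \<inter> ball \<gamma> e)"
        by (rule openin_open_Int) simp
      show "\<gamma> \<in> {\<gamma>\<^sub>1..\<gamma>\<^sub>2} \<inter> ball \<gamma> e"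
        using \<open>e > 0\<close> \<open>\<gamma> \<in> {\<gamma>\<^sub>1..\<gamma>\<^sub>2}\<close> by simp
      fix \<gamma>' assume "\<gamma>' \<in> {\<gamma>\<^sub>1..\<gamma>\<^sub>2} \<inter> ball \<gamma> e"
      then have "\<bar>\<gamma>' - \<gamma>\<bar> < e"
        by (simp add: dist_real_def abs_minus_commute)
      then show "fiber (Uset \<mu> \<Phi> \<gamma>') 0 = fiber (Uset \<mu> \<Phi> \<gamma>) 0"
        by (rule e)
    qed
  qed simp
  then obtain U where "\<And>\<gamma>. \<gamma> \<in> {\<gamma>\<^sub>1..\<gamma>\<^sub>2} \<Longrightarrow> fiber (Uset \<mu> \<Phi> \<gamma>) 0 = U"
    by (auto simp: constant_on_def)
  then show ?thesis
    using assms(1) by simp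
qed

lemma resolvent_interval_if_fibers_eq:
  assumes "\<gamma>\<^sub>1 \<le> \<gamma>\<^sub>2" and "\<gamma>\<^sub>1 \<in> rhoND \<mu> A" and "\<gamma>\<^sub>2 \<in> rhoND \<mu> A"
    and "fiber (Uset \<mu> \<Phi> \<gamma>\<^sub>1) 0 = fiber (Uset \<mu> \<Phi> \<gamma>\<^sub>2) 0"
    and "fiber (Vset \<mu> \<Phi> \<gamma>\<^sub>1) 0 = fiber (Vset \<mu> \<Phi> \<gamma>\<^sub>2) 0"
  shows "{\<gamma>\<^sub>1..\<gamma>\<^sub>2} \<subseteq> rhoND \<mu> A"
proof
  obtain P\<^sub>1 K\<^sub>1 \<alpha>\<^sub>1 \<beta>\<^sub>1 \<theta>\<^sub>1 \<nu>\<^sub>1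
    where dich\<^sub>1: "mu_dichotomy \<mu> (shifted_evol \<mu> \<Phi> \<gamma>\<^sub>1) P\<^sub>1 K\<^sub>1 \<alpha>\<^sub>1 \<beta>\<^sub>1 \<theta>\<^sub>1 \<nu>\<^sub>1"
    using assms(2) rhoND_iff_mu_dichotomy by blast
  obtain P\<^sub>2 K\<^sub>2 \<alpha>\<^sub>2 \<beta>\<^sub>2 \<theta>\<^sub>2 \<nu>\<^sub>2
    where dich\<^sub>2: "mu_dichotomy \<mu> (shifted_evol \<mu> \<Phi> \<gamma>\<^sub>2) P\<^sub>2 K\<^sub>2 \<alpha>\<^sub>2 \<beta>\<^sub>2 \<theta>\<^sub>2 \<nu>\<^sub>2"
    using assms(3) rhoND_iff_mu_dichotomy by blast
  have "P\<^sub>1 0 = P\<^sub>2 0"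
  proof (rule projection_eqI)
    show "P\<^sub>1 0 ** P\<^sub>1 0 = P\<^sub>1 0" "P\<^sub>2 0 ** P\<^sub>2 0 = P\<^sub>2 0"
      using dich\<^sub>1 dich\<^sub>2 by (simp_all add: mu_dichotomy_def)
    show "{\<xi>. P\<^sub>1 0 *v \<xi> = \<xi>} = {\<xi>. P\<^sub>2 0 *v \<xi> = \<xi>}"
      using assms(4) by (simp only: fiber_Uset_mu_dichotomy[OF dich\<^sub>1] fiber_Uset_mu_dichotomy[OF dich\<^sub>2])
    show "{\<xi>. P\<^sub>1 0 *v \<xi> = 0} = {\<xi>. P\<^sub>2 0 *v \<xi> = 0}"
      using assms(5) by (simp only: fiber_Vset_mu_dichotomy[OF dich\<^sub>1] fiber_Vset_mu_dichotomy[OF dich\<^sub>2])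
  qed
  have "P\<^sub>1 = P\<^sub>2"
  proof
    fix t
    show "P\<^sub>1 t = P\<^sub>2 t"
      using mu_dichotomy_projection_eq[OF dich\<^sub>1, of t] mu_dichotomy_projection_eq[OF dich\<^sub>2, of t]
        \<open>P\<^sub>1 0 = P\<^sub>2 0\<close> by simp
  qed
  then have dich\<^sub>2': "mu_dichotomy \<mu> (shifted_evol \<mu> (shifted_evol \<mu> \<Phi> \<gamma>\<^sub>1) (\<gamma>\<^sub>2 - \<gamma>\<^sub>1))
      P\<^sub>1 K\<^sub>2 \<alpha>\<^sub>2 \<beta>\<^sub>2 \<theta>\<^sub>2 \<nu>\<^sub>2"
    using dich\<^sub>2 by (simp add: shifted_evol_add)
  fix \<gamma> assume "\<gamma> \<in> {\<gamma>\<^sub>1..\<gamma>\<^sub>2}"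
  then have "mu_dichotomy \<mu> (shifted_evol \<mu> (shifted_evol \<mu> \<Phi> \<gamma>\<^sub>1) (\<gamma> - \<gamma>\<^sub>1)) P\<^sub>1 (max K\<^sub>1 K\<^sub>2)
      (\<alpha>\<^sub>1 - (\<gamma> - \<gamma>\<^sub>1)) (\<beta>\<^sub>2 + (\<gamma>\<^sub>2 - \<gamma>\<^sub>1) - (\<gamma> - \<gamma>\<^sub>1)) \<theta>\<^sub>1 \<nu>\<^sub>2"
    by (intro mu_dichotomy_shifted_between[OF growth_rate dich\<^sub>1 dich\<^sub>2']) auto
  then have "mu_dichotomy \<mu> (shifted_evol \<mu> \<Phi> \<gamma>) P\<^sub>1 (max K\<^sub>1 K\<^sub>2)
      (\<alpha>\<^sub>1 - (\<gamma> - \<gamma>\<^sub>1)) (\<beta>\<^sub>2 + (\<gamma>\<^sub>2 - \<gamma>\<^sub>1) - (\<gamma> - \<gamma>\<^sub>1)) \<theta>\<^sub>1 \<nu>\<^sub>2"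
    by (simp add: shifted_evol_add)
  then show "\<gamma> \<in> rhoND \<mu> A"
    unfolding rhoND_iff_mu_dichotomy by blast
qed

lemma dim_fiber_Uset_less_iff_spectrum:
  assumes "\<gamma>\<^sub>1 < \<gamma>\<^sub>2" and "\<gamma>\<^sub>1 \<in> rhoND \<mu> A" and "\<gamma>\<^sub>2 \<in> rhoND \<mu> A"
  shows "dim (fiber (Uset \<mu> \<Phi> \<gamma>\<^sub>1) 0) < dim (fiber (Uset \<mu> \<Phi> \<gamma>\<^sub>2) 0)
    \<longleftrightarrow> {\<gamma>\<^sub>1..\<gamma>\<^sub>2} \<inter> SigmaND \<mu> A \<noteq> {}"
proof
  assume "dim (fiber (Uset \<mu> \<Phi> \<gamma>\<^sub>1) 0) < dim (fiber (Uset \<mu> \<Phi> \<gamma>\<^sub>2) 0)"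
  then have "\<not> {\<gamma>\<^sub>1..\<gamma>\<^sub>2} \<subseteq> rhoND \<mu> A"
    using fiber_Uset_constant_on_resolvent_interval[of \<gamma>\<^sub>1 \<gamma>\<^sub>2] assms(1) by auto
  then show "{\<gamma>\<^sub>1..\<gamma>\<^sub>2} \<inter> SigmaND \<mu> A \<noteq> {}"
    by (auto simp: rhoND_def)
next
  let ?U = "\<lambda>\<gamma>. fiber (Uset \<mu> \<Phi> \<gamma>) 0" and ?V = "\<lambda>\<gamma>. fiber (Vset \<mu> \<Phi> \<gamma>) 0"
  have "?U \<gamma>\<^sub>1 \<subseteq> ?U \<gamma>\<^sub>2" "?V \<gamma>\<^sub>2 \<subseteq> ?V \<gamma>\<^sub>1"
    using Uset_mono[OF growth_rate, of \<gamma>\<^sub>1 \<gamma>\<^sub>2 \<Phi>] Vset_antimono[OF growth_rate, of \<gamma>\<^sub>1 \<gamma>\<^sub>2 \<Phi>] assms(1)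
    unfolding fiber_def by auto
  note compl\<^sub>1 = fibers_complementary[OF assms(2)]
    and compl\<^sub>2 = fibers_complementary[OF assms(3)]
  assume "{\<gamma>\<^sub>1..\<gamma>\<^sub>2} \<inter> SigmaND \<mu> A \<noteq> {}"
  then have "\<not> {\<gamma>\<^sub>1..\<gamma>\<^sub>2} \<subseteq> rhoND \<mu> A"
    by (auto simp: rhoND_def)
  then have fibers_differ: "?U \<gamma>\<^sub>1 \<noteq> ?U \<gamma>\<^sub>2 \<or> ?V \<gamma>\<^sub>1 \<noteq> ?V \<gamma>\<^sub>2"
    using resolvent_interval_if_fibers_eq[OF less_imp_le[OF assms(1)] assms(2,3)] by blast
  have "dim (?U \<gamma>\<^sub>1) \<noteq> dim (?U \<gamma>\<^sub>2)"
  proof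
    assume "dim (?U \<gamma>\<^sub>1) = dim (?U \<gamma>\<^sub>2)"
    moreover from this have "dim (?V \<gamma>\<^sub>1) \<le> dim (?V \<gamma>\<^sub>2)"
      using compl\<^sub>1(4) compl\<^sub>2(4) by linarith
    ultimately have "?U \<gamma>\<^sub>1 = ?U \<gamma>\<^sub>2" "?V \<gamma>\<^sub>2 = ?V \<gamma>\<^sub>1"
      using subspace_dim_equal[OF compl\<^sub>1(1) compl\<^sub>2(1) \<open>?U \<gamma>\<^sub>1 \<subseteq> ?U \<gamma>\<^sub>2\<close>]
        subspace_dim_equal[OF compl\<^sub>2(2) compl\<^sub>1(2) \<open>?V \<gamma>\<^sub>2 \<subseteq> ?V \<gamma>\<^sub>1\<close>] by simp_all
    with fibers_differ show False
      by simp
  qed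
  with dim_subset[OF \<open>?U \<gamma>\<^sub>1 \<subseteq> ?U \<gamma>\<^sub>2\<close>] show "dim (?U \<gamma>\<^sub>1) < dim (?U \<gamma>\<^sub>2)"
    by linarith
qed

end

theorem mainTheorem6:
  fixes A :: "real \<Rightarrow> real^'n^'n" and \<Phi> :: "real \<Rightarrow> real \<Rightarrow> real^'n^'n"
    and \<mu> :: "real \<Rightarrow> real" and \<gamma>1 \<gamma>2 :: real
  assumes "continuous_on UNIV A" and "evol_op A \<Phi>"
    and "diff_growth_rate \<mu>"
    and "\<gamma>1 \<in> rhoND \<mu> A" and "\<gamma>2 \<in> rhoND \<mu> A" and "\<gamma>1 < \<gamma>2"
  shows "(Uset \<mu> \<Phi> \<gamma>2 \<inter> Vset \<mu> \<Phi> \<gamma>1 \<noteq> UNIV \<times> {0}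
            \<longleftrightarrow> {\<gamma>1..\<gamma>2} \<inter> SigmaND \<mu> A \<noteq> {})
       \<and> ({\<gamma>1..\<gamma>2} \<inter> SigmaND \<mu> A \<noteq> {}
            \<longleftrightarrow> rank_im (Uset \<mu> \<Phi> \<gamma>1) < rank_im (Uset \<mu> \<Phi> \<gamma>2))
       \<and> (rank_im (Uset \<mu> \<Phi> \<gamma>1) < rank_im (Uset \<mu> \<Phi> \<gamma>2)
            \<longleftrightarrow> rank_im (Vset \<mu> \<Phi> \<gamma>1) > rank_im (Vset \<mu> \<Phi> \<gamma>2))"
proof -
  interpret growth_rate_linear_system A \<Phi> \<mu>
    using assms(1-3) by unfold_locales
  note compl\<^sub>1 = fibers_complementary[OF assms(4)]
    and compl\<^sub>2 = fibers_complementary[OF assms(5)]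
  have "fiber (Uset \<mu> \<Phi> \<gamma>1) 0 \<subseteq> fiber (Uset \<mu> \<Phi> \<gamma>2) 0"
    using Uset_mono[OF growth_rate, of \<gamma>1 \<gamma>2 \<Phi>] assms(6) unfolding fiber_def by auto
  from nontrivial_Int_iff_dim_less[OF compl\<^sub>1(1) compl\<^sub>2(1) compl\<^sub>1(2) this compl\<^sub>1(3,4)]
  have "Uset \<mu> \<Phi> \<gamma>2 \<inter> Vset \<mu> \<Phi> \<gamma>1 \<noteq> UNIV \<times> {0}
      \<longleftrightarrow> rank_im (Uset \<mu> \<Phi> \<gamma>1) < rank_im (Uset \<mu> \<Phi> \<gamma>2)"
    unfolding Uset_Int_Vset_nontrivial_iff rank_im_eq_dim_fiber .
  moreover have "rank_im (Uset \<mu> \<Phi> \<gamma>1) < rank_im (Uset \<mu> \<Phi> \<gamma>2)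
      \<longleftrightarrow> {\<gamma>1..\<gamma>2} \<inter> SigmaND \<mu> A \<noteq> {}"
    unfolding rank_im_eq_dim_fiber by (rule dim_fiber_Uset_less_iff_spectrum[OF assms(6,4,5)])
  moreover have "rank_im (Uset \<mu> \<Phi> \<gamma>1) < rank_im (Uset \<mu> \<Phi> \<gamma>2)
      \<longleftrightarrow> rank_im (Vset \<mu> \<Phi> \<gamma>1) > rank_im (Vset \<mu> \<Phi> \<gamma>2)"
    unfolding rank_im_eq_dim_fiber using compl\<^sub>1(4) compl\<^sub>2(4) by linarith
  ultimately show ?thesis
    by blast
qed

end
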